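(* Let $\hat V:[0,T]\times\mathbb{R}^n\times\mathbb{R}^n\to\mathbb{R}$, together with a feedback map $\hat\pi:[0,T]\times\mathbb{R}^n\times\mathbb{R}^n\times U\to U$, be a funnel generator function with respect to the time-varying region $R^s(\cdot)$ and level $\beta$ (as defined in the context). Let $(x_r(\cdot),u_r(\cdot))$ be a reference on $[0,T]$ with $x_r$ differentiable, $\dot x_r(t)=f_r(x_r(t),u_r(t))$ and $(x_r(t),u_r(t))\in R^s(t)$ for all $t\in[0,T]$. Define the feedback law $\pi(t,x)=\hat\pi(t,x,x_r(t),u_r(t))$ and the time-varying set $$\mathcal F(t)=\{x\in\mathbb{R}^n : \hat V(t,x,x_r(t))\le\beta\},\qquad t\in[0,T].$$ Then $\mathcal F$ is a funnel (region of finite-time invariance) for the closed-loop system $\dot x=f(x,\pi(t,x))$ that covers the reference: (i) $x_r(t)\in\mathcal F(t)$ for all $t\in[0,T]$; and (ii) for every $t\in[0,T]$ and every closed-loop solution $x(\cdot)$ defined on $[t,T]$, if $x(t)\in\mathcal F(t)$ then $x(t')\in\mathcal F(t')$ for all $t'\in[t,T]$.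
   Context: The plant is $\dot x=f(x,u)$ with state $x\in\mathbb{R}^n$, input $u\in U\subseteq\mathbb{R}^m$, $f$ polynomial. The reference (planning) model is $\dot x_r=f_r(x_r,u_r)$ with $x_r\in\mathbb{R}^n$ (reference state space equals the plant state space) and $u_r\in U$; write $r=(x_r,u_r)$. $T>0$ is a finite horizon and $R^s:[0,T]\to\mathcal P(\mathbb{R}^n\times U)$ is a given time-varying set of admissible reference state–input pairs. Fix $\beta\in\mathbb{R}$. A funnel generator function w.r.t. $R^s(\cdot)$ is a continuously differentiable function $\hat V:[0,T]\times\mathbb{R}^n\times\mathbb{R}^n\to\mathbb{R}$, radially unbounded in $x$, together with a continuous map $\hat\pi:[0,T]\times\mathbb{R}^n\times\mathbb{R}^n\times U\to U$, such that for all $t\in[0,T]$: (1) for all $x\in\mathbb{R}^n$, $\hat V(t,x,x)<\beta$; (2) for all $(x_r,u_r)\in R^s(t)$ and all $x$ with $\hat V(t,x,x_r)=\beta$, $$\frac{d\hat V}{dt}:=\nabla_x\hat V(t,x,x_r)\cdot f\big(x,\hat\pi(t,x,x_r,u_r)\big)+\nabla_{x_r}\hat V(t,x,x_r)\cdot f_r(x_r,u_r)+\frac{\partial\hat V}{\partial t}(t,x,x_r)<0.$$ A funnel is a map $\mathcal F:[0,T]\to\mathcal P(\mathbb{R}^n)$ such that for every $t\in[0,T]$, $x(t)\in\mathcal F(t)$ implies $x(t')\in\mathcal F(t')$ for all $t'\in[t,T]$ along closed-loop trajectories; it covers $x_r(\cdot)$ if $x_r(t)\in\mathcal F(t)$ for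 all $t$. *)

theory Defs
  imports "HOL-Analysis.Analysis"
begin

inductive real_poly_fun :: "('a::euclidean_space \<Rightarrow> real) \<Rightarrow> bool" where
  const: "real_poly_fun (\<lambda>z. c)"
| coord: "i \<in> Basis \<Longrightarrow> real_poly_fun (\<lambda>z. z \<bullet> i)"
| add: "real_poly_fun p \<Longrightarrow> real_poly_fun q \<Longrightarrow> real_poly_fun (\<lambda>z. p z + q z)"
| mult: "real_poly_fun p \<Longrightarrow> real_poly_fun q \<Longrightarrow> real_poly_fun (\<lambda>z. p z * q z)"

definition polynomial_field :: "(real^'n \<Rightarrow> real^'m \<Rightarrow> real^'n) \<Rightarrow> bool" where
  "polynomial_field f \<longleftrightarrow> (\<forall>i. real_poly_fun (\<lambda>(z::(real^'n) \<times> (real^'m)). f (fst z) (snd z) $ i))"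

text \<open>The function Vh is
  continuously differentiable on [0,T] x R^n x R^n with (Frechet) derivative DV, which is
  continuous; gradients are obtained by applying DV to coordinate directions.\<close>
definition funnel_generator ::
  "(real^'n \<Rightarrow> real^'m \<Rightarrow> real^'n) \<Rightarrow> (real^'n \<Rightarrow> real^'m \<Rightarrow> real^'n) \<Rightarrow> (real^'m) set \<Rightarrow>
   real \<Rightarrow> (real \<Rightarrow> ((real^'n) \<times> (real^'m)) set) \<Rightarrow> real \<Rightarrow>
   (real \<Rightarrow> real^'n \<Rightarrow> real^'n \<Rightarrow> real) \<Rightarrow>
   (real \<times> (real^'n) \<times> (real^'n) \<Rightarrow> (real \<times> (real^'n) \<times> (real^'n)) \<Rightarrow>\<^sub>L real) \<Rightarrow>
   (real \<Rightarrow> real^'n \<Rightarrow> real^'n \<Rightarrow> real^'m \<Rightarrow> real^'m) \<Rightarrow> bool" where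
  "funnel_generator f fr U T Rs \<beta> Vh DV pih \<longleftrightarrow>
     \<comment> \<open>continuous differentiability\<close>
     (\<forall>p \<in> {0..T} \<times> UNIV \<times> UNIV.
        ((\<lambda>(t,x,xr). Vh t x xr) has_derivative blinfun_apply (DV p)) (at p within {0..T} \<times> UNIV \<times> UNIV)) \<and>
     continuous_on ({0..T} \<times> UNIV \<times> UNIV) DV \<and>
     \<comment> \<open>radial unboundedness in x\<close>
     (\<forall>t\<in>{0..T}. \<forall>xr. filterlim (\<lambda>x. Vh t x xr) at_top at_infinity) \<and>
     \<comment> \<open>pih is a continuous map into U\<close>
     continuous_on ({0..T} \<times> UNIV \<times> UNIV \<times> U) (\<lambda>(t,x,xr,u). pih t x xr u) \<and>
     (\<forall>t\<in>{0..T}. \<forall>x xr. \<forall>u\<in>U. pih t x xr u \<in> U) \<and>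
     \<comment> \<open>condition (1)\<close>
     (\<forall>t\<in>{0..T}. \<forall>x. Vh t x x < \<beta>) \<and>
     \<comment> \<open>condition (2)\<close>
     (\<forall>t\<in>{0..T}. \<forall>xr ur x. (xr, ur) \<in> Rs t \<longrightarrow> Vh t x xr = \<beta> \<longrightarrow>
        blinfun_apply (DV (t,x,xr)) (0, f x (pih t x xr ur), 0)
        + blinfun_apply (DV (t,x,xr)) (0, 0, fr xr ur)
        + blinfun_apply (DV (t,x,xr)) (1, 0, 0) < 0)"

end

theory Submission
  imports Defs
begin

text \<open>Along a closed-loop solution, the scalar function \<open>g(s) = V(s, x(s), x\<^sub>r(s)) - \<beta>\<close>
  is differentiable and, by condition (2), has negative derivative wherever it vanishes.
  Such a function cannot cross zero upwards: at the last time \<open>s\<^sub>0\<close> before a positive value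
  with \<open>g(s\<^sub>0) \<le> 0\<close>, either \<open>g(s\<^sub>0) < 0\<close> and continuity, or \<open>g(s\<^sub>0) = 0\<close> and the negative
  derivative, keep \<open>g\<close> nonpositive a little longer, a contradiction.
  Condition (1) places the reference itself inside the funnel.\<close>

lemma nonpos_right_of_nonpos:
  fixes g :: "real \<Rightarrow> real"
  assumes deriv: "(g has_real_derivative l) (at s within S)"
    and zero_neg: "g s = 0 \<Longrightarrow> l < 0"
    and nonpos: "g s \<le> 0"
  shows "\<exists>d>0. \<forall>h>0. s + h \<in> S \<longrightarrow> h < d \<longrightarrow> g (s + h) \<le> 0"
proof (cases "g s = 0")
  case True
  then show ?thesis
    using has_real_derivative_neg_dec_right[OF deriv zero_neg] by (metis less_imp_le)
next
  case False
  with nonpos have neg: "g s < 0" by simp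
  have "continuous (at s within S) g"
    using deriv by (rule DERIV_continuous)
  then obtain d where "d > 0" and d: "\<And>y. y \<in> S \<Longrightarrow> dist y s < d \<Longrightarrow> dist (g y) (g s) < - g s"
    using neg unfolding continuous_within_eps_delta by (meson neg_0_less_iff_less)
  then show ?thesis
    by (intro exI[of _ d]) (force simp: dist_real_def)
qed

lemma nonpos_invariant_of_deriv_neg_at_zero:
  fixes g g' :: "real \<Rightarrow> real"
  assumes deriv: "\<And>s. s \<in> {t..T} \<Longrightarrow> (g has_real_derivative g' s) (at s within {t..T})"
    and zero_neg: "\<And>s. s \<in> {t..T} \<Longrightarrow> g s = 0 \<Longrightarrow> g' s < 0"
    and start: "g t \<le> 0" and s1: "s1 \<in> {t..T}"
  shows "g s1 \<le> 0"
proof (rule ccontr)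
  assume pos: "\<not> g s1 \<le> 0"
  define Z where "Z = {s \<in> {t..s1}. g s \<le> 0}"
  have "continuous_on {t..T} g"
    using deriv DERIV_continuous continuous_on_eq_continuous_within by blast
  then have "continuous_on {t..s1} g"
    by (rule continuous_on_subset) (use s1 in auto)
  then have "closed Z"
    unfolding Z_def by (intro continuous_on_closed_Collect_le) auto
  moreover have "t \<in> Z" "bdd_above Z"
    using start s1 by (auto simp: Z_def intro: bdd_aboveI[of _ s1])
  ultimately have s0: "Sup Z \<in> Z" and upper: "\<And>s. s \<in> Z \<Longrightarrow> s \<le> Sup Z"
    using closed_contains_Sup cSup_upper by blast+
  define s0 where "s0 = Sup Z"
  have s0_props: "g s0 \<le> 0" "t \<le> s0" "s0 < s1"
    using s0 pos unfolding s0_def Z_def by (auto simp: le_less)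
  have "s0 \<in> {t..T}"
    using s0_props s1 by auto
  then obtain d where "d > 0" and d: "\<forall>h>0. s0 + h \<in> {t..T} \<longrightarrow> h < d \<longrightarrow> g (s0 + h) \<le> 0"
    using nonpos_right_of_nonpos[OF deriv zero_neg] s0_props(1) by blast
  define h where "h = min (d/2) (s1 - s0)"
  have "h > 0" "h < d" "s0 + h \<le> s1"
    using \<open>d > 0\<close> s0_props by (auto simp: h_def)
  then have "s0 + h \<in> Z"
    using d s0_props s1 unfolding Z_def by auto
  then have "s0 + h \<le> s0"
    using upper unfolding s0_def by blast
  with \<open>h > 0\<close> show False
    by simp
qed

lemma has_real_derivative_compose_time_curves:
  fixes V :: "real \<times> 'a::real_normed_vector \<times> 'b::real_normed_vector \<Rightarrow> real"
  assumes V: "\<And>p. p \<in> D \<Longrightarrow> (V has_derivative blinfun_apply (DV p)) (at p within D)"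
    and x: "(x has_vector_derivative x') (at s within S)"
    and y: "(y has_vector_derivative y') (at s within S)"
    and curve_in: "(\<lambda>s. (s, x s, y s)) ` S \<subseteq> D" and s: "s \<in> S"
  shows "((\<lambda>s. V (s, x s, y s)) has_real_derivative blinfun_apply (DV (s, x s, y s)) (1, x', y'))
           (at s within S)"
proof -
  have "((\<lambda>s. (s, x s, y s)) has_derivative (\<lambda>h. (h, h *\<^sub>R x', h *\<^sub>R y'))) (at s within S)"
    using x y unfolding has_vector_derivative_def
    by (intro has_derivative_Pair has_derivative_ident)
  from has_derivative_in_compose2[OF V curve_in s this]
  have "((\<lambda>s. V (s, x s, y s)) has_derivative (\<lambda>h. DV (s, x s, y s) (h, h *\<^sub>R x', h *\<^sub>R y')))
          (at s within S)" .
  moreover have "DV q (h, h *\<^sub>R x', h *\<^sub>R y') = DV q (1, x', y') * h" for q h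
    using blinfun.scaleR_right[of "DV q" h "(1, x', y')"] by simp
  ultimately show ?thesis
    by (simp add: has_field_derivative_def)
qed

lemma funnel_generator_derivative_along_solution:
  assumes fg: "funnel_generator f fr U T Rs \<beta> Vh DV pih"
    and xr: "\<forall>t\<in>{0..T}. (xr has_vector_derivative fr (xr t) (ur t)) (at t within {0..T})"
    and admissible: "\<forall>t\<in>{0..T}. (xr t, ur t) \<in> Rs t"
    and x: "\<forall>s\<in>{t..T}. (x has_vector_derivative f (x s) (pih s (x s) (xr s) (ur s))) (at s within {t..T})"
    and "t \<ge> 0" and s: "s \<in> {t..T}"
  defines "dV \<equiv> DV (s, x s, xr s) (1, f (x s) (pih s (x s) (xr s) (ur s)), fr (xr s) (ur s))"
  shows "((\<lambda>s. Vh s (x s) (xr s)) has_real_derivative dV) (at s within {t..T})"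
    and "Vh s (x s) (xr s) = \<beta> \<Longrightarrow> dV < 0"
proof -
  let ?x' = "f (x s) (pih s (x s) (xr s) (ur s))" and ?xr' = "fr (xr s) (ur s)"
  have sT: "s \<in> {0..T}" using s \<open>t \<ge> 0\<close> by auto
  have "((\<lambda>(t, x, xr). Vh t x xr) has_derivative blinfun_apply (DV p))
          (at p within {0..T} \<times> UNIV \<times> UNIV)" if "p \<in> {0..T} \<times> UNIV \<times> UNIV" for p
    using fg that unfolding funnel_generator_def by blast
  moreover have "(xr has_vector_derivative ?xr') (at s within {t..T})"
    using has_vector_derivative_within_subset[of xr _ s "{0..T}" "{t..T}"] xr sT \<open>t \<ge> 0\<close> by auto
  moreover have "(\<lambda>s. (s, x s, xr s)) ` {t..T} \<subseteq> {0..T} \<times> UNIV \<times> UNIV"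
    using \<open>t \<ge> 0\<close> by auto
  ultimately show "((\<lambda>s. Vh s (x s) (xr s)) has_real_derivative dV) (at s within {t..T})"
    using has_real_derivative_compose_time_curves[where D = "{0..T} \<times> UNIV \<times> UNIV"
        and V = "\<lambda>(t, x, xr). Vh t x xr" and DV = DV and y = xr and y' = ?xr']
      x s unfolding dV_def by simp
  assume "Vh s (x s) (xr s) = \<beta>"
  then have neg: "DV (s, x s, xr s) (0, ?x', 0) + DV (s, x s, xr s) (0, 0, ?xr')
                  + DV (s, x s, xr s) (1, 0, 0) < 0"
    using fg admissible sT unfolding funnel_generator_def by blast
  have "(1, ?x', ?xr') = (0, ?x', 0) + (0, 0, ?xr') + (1::real, 0, 0)"
    by simp
  then show "dV < 0"
    using neg unfolding dV_def by (simp only: blinfun.add_right)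
qed

theorem mainTheorem1:
  fixes f fr :: "real^'n \<Rightarrow> real^'m \<Rightarrow> real^'n"
    and U :: "(real^'m) set" and T \<beta> :: real
    and Rs :: "real \<Rightarrow> ((real^'n) \<times> (real^'m)) set"
    and Vh :: "real \<Rightarrow> real^'n \<Rightarrow> real^'n \<Rightarrow> real"
    and DV :: "real \<times> (real^'n) \<times> (real^'n) \<Rightarrow> (real \<times> (real^'n) \<times> (real^'n)) \<Rightarrow>\<^sub>L real"
    and pih :: "real \<Rightarrow> real^'n \<Rightarrow> real^'n \<Rightarrow> real^'m \<Rightarrow> real^'m"
    and xr :: "real \<Rightarrow> real^'n" and ur :: "real \<Rightarrow> real^'m"
  assumes "polynomial_field f"
    and "T > 0"
    and "\<forall>t\<in>{0..T}. Rs t \<subseteq> UNIV \<times> U"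
    and "funnel_generator f fr U T Rs \<beta> Vh DV pih"
    and "\<forall>t\<in>{0..T}. (xr has_vector_derivative fr (xr t) (ur t)) (at t within {0..T})"
    and "\<forall>t\<in>{0..T}. (xr t, ur t) \<in> Rs t"
  shows "(\<forall>t\<in>{0..T}. xr t \<in> {x. Vh t x (xr t) \<le> \<beta>}) \<and>
         (\<forall>t\<in>{0..T}. \<forall>x :: real \<Rightarrow> real^'n.
            (\<forall>s\<in>{t..T}. (x has_vector_derivative f (x s) (pih s (x s) (xr s) (ur s))) (at s within {t..T}))
            \<longrightarrow> x t \<in> {y. Vh t y (xr t) \<le> \<beta>}
            \<longrightarrow> (\<forall>t'\<in>{t..T}. x t' \<in> {y. Vh t' y (xr t') \<le> \<beta>}))"
proof (intro conjI ballI allI impI)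
  fix t assume "t \<in> {0..T}"
  then show "xr t \<in> {x. Vh t x (xr t) \<le> \<beta>}"
    using assms(4) unfolding funnel_generator_def by (auto intro: less_imp_le)
next
  fix t t' and x :: "real \<Rightarrow> real^'n"
  assume "t \<in> {0..T}" and t': "t' \<in> {t..T}"
    and solution: "\<forall>s\<in>{t..T}. (x has_vector_derivative f (x s) (pih s (x s) (xr s) (ur s))) (at s within {t..T})"
    and "x t \<in> {y. Vh t y (xr t) \<le> \<beta>}"
  let ?dV = "\<lambda>s. DV (s, x s, xr s) (1, f (x s) (pih s (x s) (xr s) (ur s)), fr (xr s) (ur s))"
  note along = funnel_generator_derivative_along_solution[OF assms(4,5,6) solution]
  have "Vh t' (x t') (xr t') - \<beta> \<le> 0"
  proof (rule nonpos_invariant_of_deriv_neg_at_zero[OF _ _ _ t'])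
    fix s assume "s \<in> {t..T}"
    with \<open>t \<in> {0..T}\<close> show "((\<lambda>s. Vh s (x s) (xr s) - \<beta>) has_real_derivative ?dV s) (at s within {t..T})"
      using along(1) by (auto intro!: derivative_eq_intros)
  next
    fix s assume "s \<in> {t..T}" and "Vh s (x s) (xr s) - \<beta> = 0"
    with \<open>t \<in> {0..T}\<close> show "?dV s < 0"
      using along(2) by auto
  qed (use \<open>x t \<in> _\<close> in auto)
  then show "x t' \<in> {y. Vh t' y (xr t') \<le> \<beta>}" by simp
qed

end
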